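(* Let $q\in\mathbb{C}$ be generic (in particular $q\neq 0$, $q^2\neq 1$), let $\hbar,c\in\mathbb{C}$, and let $A^c_{\hbar,q}$, $K$, $a$, $\tilde c$, $\tilde v$ be as in the context. Then for every natural number $k$, $$K\tilde v^{k}=q\,\beta_k(q)\Big[\frac{q^{2(k+1)}-1}{q^{2}-1}\,\tilde v^k+a(q^2+1)\frac{q^{2k}-1}{q^{2}-1}\,\tilde v^{k-1}-\tilde c\,q^2\,\frac{q^{2(k-1)}-1}{q^{2}-1}\,\tilde v^{k-2}\Big],$$ where $\beta_k(q)=\dfrac{q^{2k}-1}{q^{2k-1}(q^{2}-1)}$ and, by convention, $\tilde v^{-1}=\tilde v^{-2}=0$.
   Context: $U_q(sl(2))$ is the algebra generated by $E_+,E_-,X,Y$ with relations $E_{\pm}X=q^{\pm1}XE_{\pm}$, $E_{\pm}Y=q^{\mp1}YE_{\pm}$, $E_+E_-=E_-E_+=1$, $XY-YX=\frac{E_+^2-E_-^2}{q-q^{-1}}$, with coproduct $\Delta(X)=E_-\otimes X+X\otimes E_+$, $\Delta(Y)=E_-\otimes Y+Y\otimes E_+$, $\Delta(E_\pm)=E_\pm\otimes E_\pm$. The quantum Casimir is $K=\frac{q}{2}(XY+YX)+\frac{q^2(1+q^2)}{2(1-q^2)^2}(E_+^2+E_-^2-2)$. Let $\mathbf V$ be the 3-dimensional $U_q(sl(2))$-module with basis $u,v,w$ and action $E_\pm u=q^{\pm1}u$, $E_\pm v=v$, $E_\pm w=q^{\mp1}w$, $Xu=0$, $Xv=-(q+q^{-1})u$,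 $Xw=v$, $Yu=-v$, $Yv=(q+q^{-1})w$, $Yw=0$. The algebra $A^c_{\hbar,q}$ is the quotient of the tensor algebra $T(\mathbf V)$ by the two-sided ideal generated by $(q^2+1)uw+vv+\frac{q^2+1}{q^2}wu-c$, $q^2uv-vu+\hbar u$, $(q^2+1)(uw-wu)+(1-q^2)vv-\hbar v$, $-q^2vw+wv-\hbar w$ (products are tensor products). $U_q(sl(2))$ acts on $T(\mathbf V)$ and on $A^c_{\hbar,q}$ via the coproduct (i.e. $Z(fg)=\sum Z_{(1)}(f)Z_{(2)}(g)$ for $\Delta Z=\sum Z_{(1)}\otimes Z_{(2)}$), so $K$ acts as a linear operator on $A^c_{\hbar,q}$. Set $a=\hbar(1-q^2)^{-1}$, $\tilde c=c-a^2$, $\tilde v=v-a\in A^c_{\hbar,q}$, and $\tilde v^k$ denotes the $k$-th power of $\tilde v$ in $A^c_{\hbar,q}$ ($\tilde v^0=1$). *)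

theory Defs
  imports Complex_Main
begin

text \<open>The tensor algebra T(V) over the complex numbers on the basis u, v, w is modelled
  as functions from words (lists of generators) to coefficients; genuine elements of
  T(V) are those with finite support.  Multiplication is the tensor (concatenation)
  product.\<close>

datatype gen = gU | gV | gW

type_synonym tens = "gen list \<Rightarrow> complex"

definition wd :: "gen list \<Rightarrow> tens" where
  "wd x = (\<lambda>y. if y = x then 1 else 0)"

definition tzero :: tens where "tzero = (\<lambda>_. 0)"
definition tone :: tens where "tone = wd []"
definition tadd :: "tens \<Rightarrow> tens \<Rightarrow> tens" where "tadd f g = (\<lambda>z. f z + g z)"
definition tsub :: "tens \<Rightarrow> tens \<Rightarrow> tens" where "tsub f g = (\<lambda>z. f z - g z)"
definition tsmul :: "complex \<Rightarrow> tens \<Rightarrow> tens" where "tsmul s f = (\<lambda>z. s * f z)"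

definition tmul :: "tens \<Rightarrow> tens \<Rightarrow> tens" where
  "tmul f g = (\<lambda>z. \<Sum>i\<le>length z. f (take i z) * g (drop i z))"

primrec tpow :: "tens \<Rightarrow> nat \<Rightarrow> tens" where
  "tpow f 0 = tone"
| "tpow f (Suc n) = tmul f (tpow f n)"

definition gu :: tens where "gu = wd [gU]"
definition gv :: tens where "gv = wd [gV]"
definition gw :: tens where "gw = wd [gW]"

text \<open>Action of the generators of U_q(sl(2)) on the module V.\<close>
fun Ep1 :: "complex \<Rightarrow> gen \<Rightarrow> tens" where
  "Ep1 q gU = tsmul q gu" | "Ep1 q gV = gv" | "Ep1 q gW = tsmul (inverse q) gw"
fun Em1 :: "complex \<Rightarrow> gen \<Rightarrow> tens" where
  "Em1 q gU = tsmul (inverse q) gu" | "Em1 q gV = gv" | "Em1 q gW = tsmul q gw"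
fun X1 :: "complex \<Rightarrow> gen \<Rightarrow> tens" where
  "X1 q gU = tzero" | "X1 q gV = tsmul (- (q + inverse q)) gu" | "X1 q gW = gv"
fun Y1 :: "complex \<Rightarrow> gen \<Rightarrow> tens" where
  "Y1 q gU = tsmul (-1) gv" | "Y1 q gV = tsmul (q + inverse q) gw" | "Y1 q gW = tzero"

text \<open>Action on basis words via the coproduct:
  Delta(E) = E (x) E, Delta(X) = E_- (x) X + X (x) E_+, Delta(Y) = E_- (x) Y + Y (x) E_+,
  with Z(f g) = sum Z_(1)(f) Z_(2)(g); here f is the first letter and g the rest.\<close>
primrec EpW :: "complex \<Rightarrow> gen list \<Rightarrow> tens" where
  "EpW q [] = tone"
| "EpW q (x # w) = tmul (Ep1 q x) (EpW q w)"

primrec EmW :: "complex \<Rightarrow> gen list \<Rightarrow> tens" where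
  "EmW q [] = tone"
| "EmW q (x # w) = tmul (Em1 q x) (EmW q w)"

primrec XW :: "complex \<Rightarrow> gen list \<Rightarrow> tens" where
  "XW q [] = tzero"
| "XW q (x # w) = tadd (tmul (Em1 q x) (XW q w)) (tmul (X1 q x) (EpW q w))"

primrec YW :: "complex \<Rightarrow> gen list \<Rightarrow> tens" where
  "YW q [] = tzero"
| "YW q (x # w) = tadd (tmul (Em1 q x) (YW q w)) (tmul (Y1 q x) (EpW q w))"

definition lin :: "(gen list \<Rightarrow> tens) \<Rightarrow> tens \<Rightarrow> tens" where
  "lin M f = (\<lambda>z. \<Sum>y\<in>{y. f y \<noteq> 0}. f y * M y z)"

definition Ep :: "complex \<Rightarrow> tens \<Rightarrow> tens" where "Ep q = lin (EpW q)"
definition Em :: "complex \<Rightarrow> tens \<Rightarrow> tens" where "Em q = lin (EmW q)"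
definition Xop :: "complex \<Rightarrow> tens \<Rightarrow> tens" where "Xop q = lin (XW q)"
definition Yop :: "complex \<Rightarrow> tens \<Rightarrow> tens" where "Yop q = lin (YW q)"

definition Kop :: "complex \<Rightarrow> tens \<Rightarrow> tens" where
  "Kop q f = tadd
     (tsmul (q / 2) (tadd (Xop q (Yop q f)) (Yop q (Xop q f))))
     (tsmul (q^2 * (1 + q^2) / (2 * (1 - q^2)^2))
        (tsub (tadd (Ep q (Ep q f)) (Em q (Em q f))) (tsmul 2 f)))"

definition rels :: "complex \<Rightarrow> complex \<Rightarrow> complex \<Rightarrow> tens set" where
  "rels q h c = {
     tsub (tadd (tadd (tsmul (q^2 + 1) (tmul gu gw)) (tmul gv gv))
                (tsmul ((q^2 + 1) / q^2) (tmul gw gu))) (tsmul c tone),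
     tadd (tsub (tsmul (q^2) (tmul gu gv)) (tmul gv gu)) (tsmul h gu),
     tsub (tadd (tsmul (q^2 + 1) (tsub (tmul gu gw) (tmul gw gu))) (tsmul (1 - q^2) (tmul gv gv)))
          (tsmul h gv),
     tsub (tadd (tsmul (- (q^2)) (tmul gv gw)) (tmul gw gv)) (tsmul h gw) }"

text \<open>The two-sided ideal of T(V) generated by the relations: all finite linear
  combinations of terms (word) * relation * (word).\<close>
inductive_set relideal :: "complex \<Rightarrow> complex \<Rightarrow> complex \<Rightarrow> tens set"
  for q h c where
  zero: "tzero \<in> relideal q h c"
| step: "x \<in> relideal q h c \<Longrightarrow> r \<in> rels q h c \<Longrightarrow>
           tadd x (tsmul s (tmul (tmul (wd l) r) (wd m))) \<in> relideal q h c"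

text \<open>Equality in the quotient algebra A^c_{hbar,q} = T(V)/I.\<close>
definition eqA :: "complex \<Rightarrow> complex \<Rightarrow> complex \<Rightarrow> tens \<Rightarrow> tens \<Rightarrow> bool" where
  "eqA q h c f g \<longleftrightarrow> tsub f g \<in> relideal q h c"

definition tpowm :: "tens \<Rightarrow> nat \<Rightarrow> nat \<Rightarrow> tens" where
  "tpowm f k j = (if j \<le> k then tpow f (k - j) else tzero)"

definition betaq :: "nat \<Rightarrow> complex \<Rightarrow> complex" where
  "betaq k q = (q^(2*k) - 1) / (q powi (2 * int k - 1) * (q^2 - 1))"

end

theory Submission
  imports Defs
begin

(*
  E+ and E- fix vt = v - a, hence every power vt^k, so on vt^k the Casimir reduces to
  (q/2)(XY + YX).  The twisted Leibniz rules of X and Y then give, already in T(V),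
    K vt^(k+1) = vt K vt^k + (q^2+1) (v vt^k + q w X vt^k - q^-1 u Y vt^k).
  In the quotient, vt u = q^2 u vt and vt w = q^-2 w vt, so
    X vt^(k+1) = -(q + q^-1) [k+1]_(q^2) u vt^k,   Y vt^(k+1) = (q + q^-1) [k+1]_(q^-2) w vt^k,
  while (q^2+1)^2 uw and (q^2+1)^2 wu are quadratic polynomials in vt.  Hence K vt^(k+2) is a
  combination of vt^(k+2), vt^(k+1), vt^k whose coefficients obey first-order recursions in k;
  these are solved by the stated closed forms, in which q beta_k = [k]_(q^-2).
*)

definition splits :: "gen list \<Rightarrow> (gen list \<times> gen list) set" where
  "splits z = {(x, y). x @ y = z}"

lemma splits_eq_image: "splits z = (\<lambda>i. (take i z, drop i z)) ` {..length z}"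
  unfolding splits_def
proof safe
  fix x y :: "gen list"
  show "(x, y) \<in> (\<lambda>i. (take i (x @ y), drop i (x @ y))) ` {..length (x @ y)}"
    by (intro image_eqI[of _ _ "length x"]) auto
qed auto

lemma finite_splits [simp]: "finite (splits z)"
  unfolding splits_eq_image by simp

lemma tmul_eq_sum_splits: "tmul f g z = (\<Sum>(x, y)\<in>splits z. f x * g y)"
proof -
  have "inj_on (\<lambda>i. (take i z, drop i z)) {..length z}"
    by (rule inj_onI) (metis Pair_inject atMost_iff length_take min.absorb2)
  then show ?thesis
    unfolding tmul_def splits_eq_image by (simp add: sum.reindex)
qed

lemma tmul_assoc: "tmul (tmul f g) h = tmul f (tmul g h)"
proof
  fix z
  have "tmul (tmul f g) h z
      = (\<Sum>((p, w), (x, y))\<in>Sigma (splits z) (\<lambda>(p, w). splits p). f x * g y * h w)"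
    by (simp add: tmul_eq_sum_splits sum_distrib_right sum.Sigma split_def)
  also have "\<dots> = (\<Sum>((x, r), (y, w))\<in>Sigma (splits z) (\<lambda>(x, r). splits r). f x * g y * h w)"
    by (rule sum.reindex_bij_witness[where i = "\<lambda>((x, r), (y, w)). ((x @ y, w), (x, y))"
          and j = "\<lambda>((p, w), (x, y)). ((x, y @ w), (y, w))"]) (auto simp: splits_def)
  also have "\<dots> = tmul f (tmul g h) z"
    by (simp add: tmul_eq_sum_splits sum_distrib_left sum.Sigma split_def mult.assoc)
  finally show "tmul (tmul f g) h z = tmul f (tmul g h) z" .
qed

lemma tmul_tadd_left: "tmul (tadd f g) h = tadd (tmul f h) (tmul g h)"
  by (simp add: fun_eq_iff tmul_def tadd_def sum.distrib distrib_right)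

lemma tmul_tadd_right: "tmul h (tadd f g) = tadd (tmul h f) (tmul h g)"
  by (simp add: fun_eq_iff tmul_def tadd_def sum.distrib distrib_left)

lemma tmul_tsub_left: "tmul (tsub f g) h = tsub (tmul f h) (tmul g h)"
  by (simp add: fun_eq_iff tmul_def tsub_def sum_subtractf left_diff_distrib)

lemma tmul_tsub_right: "tmul h (tsub f g) = tsub (tmul h f) (tmul h g)"
  by (simp add: fun_eq_iff tmul_def tsub_def sum_subtractf right_diff_distrib)

lemma tmul_tsmul_left: "tmul (tsmul s f) h = tsmul s (tmul f h)"
  by (simp add: fun_eq_iff tmul_def tsmul_def sum_distrib_left mult.assoc)

lemma tmul_tsmul_right: "tmul h (tsmul s f) = tsmul s (tmul h f)"
  by (simp add: fun_eq_iff tmul_def tsmul_def sum_distrib_left mult.left_commute)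

lemma tmul_tzero_left [simp]: "tmul tzero f = tzero"
  by (simp add: fun_eq_iff tmul_def tzero_def)

lemma tmul_tzero_right [simp]: "tmul f tzero = tzero"
  by (simp add: fun_eq_iff tmul_def tzero_def)

lemmas tmul_distribs =
  tmul_tadd_left tmul_tadd_right tmul_tsub_left tmul_tsub_right tmul_tsmul_left tmul_tsmul_right

lemma tmul_wd_left:
  "tmul (wd x) f z = (if take (length x) z = x then f (drop (length x) z) else 0)"
proof -
  have "tmul (wd x) f z = (\<Sum>(x', y)\<in>splits z \<inter> {(x', y). x' = x}. f y)"
    unfolding tmul_eq_sum_splits
    by (rule sum.mono_neutral_cong_right) (auto simp: wd_def split: if_splits)
  moreover have "splits z \<inter> {(x', y). x' = x} = {(x, drop (length x) z)}"
    if "take (length x) z = x"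
    using that by (auto simp: splits_def) (metis append_take_drop_id)
  moreover have "splits z \<inter> {(x', y). x' = x} = {}" if "take (length x) z \<noteq> x"
    using that by (auto simp: splits_def)
  ultimately show ?thesis
    by (cases "take (length x) z = x") simp_all
qed

lemma tmul_wd_wd: "tmul (wd x) (wd y) = wd (x @ y)"
proof
  fix z
  have "z = x @ y \<longleftrightarrow> take (length x) z = x \<and> drop (length x) z = y"
    by (metis append_eq_conv_conj)
  then show "tmul (wd x) (wd y) z = wd (x @ y) z"
    unfolding tmul_wd_left by (simp add: wd_def)
qed

lemma tmul_tone_left [simp]: "tmul tone f = f"
  by (simp add: fun_eq_iff tone_def tmul_wd_left)

lemma tmul_tone_right [simp]: "tmul f tone = f"
proof
  fix z
  have "tmul f tone z = (\<Sum>(x, y)\<in>{(z, [])}. f x * tone y)"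
    unfolding tmul_eq_sum_splits
    by (rule sum.mono_neutral_right[OF finite_splits])
      (auto simp: tone_def wd_def splits_def split: if_splits)
  then show "tmul f tone z = f z" by (simp add: tone_def wd_def)
qed

lemma tadd_tzero [simp]: "tadd f tzero = f" "tadd tzero f = f"
  by (simp_all add: fun_eq_iff tadd_def tzero_def)

lemma tsub_tzero [simp]: "tsub f tzero = f"
  by (simp add: fun_eq_iff tsub_def tzero_def)

lemma tsmul_tzero [simp]: "tsmul s tzero = tzero"
  by (simp add: fun_eq_iff tsmul_def tzero_def)

lemma tsmul_zero [simp]: "tsmul 0 f = tzero"
  by (simp add: fun_eq_iff tsmul_def tzero_def)

lemma tsmul_tsmul [simp]: "tsmul s (tsmul t f) = tsmul (s * t) f"
  by (simp add: fun_eq_iff tsmul_def)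

lemma tadd_assoc: "tadd (tadd f g) h = tadd f (tadd g h)"
  by (simp add: fun_eq_iff tadd_def add.assoc)

lemma tpow_add: "tmul (tpow f m) (tpow f n) = tpow f (m + n)"
  by (induction m) (simp_all add: tmul_assoc)


definition finsupp :: "tens \<Rightarrow> bool" where
  "finsupp f \<longleftrightarrow> finite {y. f y \<noteq> 0}"

lemma finsupp_wd [simp]: "finsupp (wd x)"
  by (simp add: finsupp_def wd_def)

lemma finsupp_tone [simp]: "finsupp tone"
  by (simp add: tone_def)

lemma finsupp_tzero [simp]: "finsupp tzero"
  by (simp add: finsupp_def tzero_def)

lemma finsupp_gens [simp]: "finsupp gu" "finsupp gv" "finsupp gw"
  by (simp_all add: gu_def gv_def gw_def)

lemma finsupp_tadd [simp]: "finsupp f \<Longrightarrow> finsupp g \<Longrightarrow> finsupp (tadd f g)"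
  unfolding finsupp_def tadd_def
  by (rule finite_subset[of _ "{y. f y \<noteq> 0} \<union> {y. g y \<noteq> 0}"]) auto

lemma finsupp_tsub [simp]: "finsupp f \<Longrightarrow> finsupp g \<Longrightarrow> finsupp (tsub f g)"
  unfolding finsupp_def tsub_def
  by (rule finite_subset[of _ "{y. f y \<noteq> 0} \<union> {y. g y \<noteq> 0}"]) auto

lemma finsupp_tsmul [simp]: "finsupp f \<Longrightarrow> finsupp (tsmul s f)"
  unfolding finsupp_def tsmul_def by (rule finite_subset[of _ "{y. f y \<noteq> 0}"]) auto

lemma finsupp_tmul [simp]:
  assumes "finsupp f" and "finsupp g"
  shows "finsupp (tmul f g)"
proof -
  have supp: "{z. tmul f g z \<noteq> 0} \<subseteq> (\<lambda>(x, y). x @ y) ` ({x. f x \<noteq> 0} \<times> {y. g y \<noteq> 0})"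
  proof
    fix z
    assume "z \<in> {z. tmul f g z \<noteq> 0}"
    then obtain x y where "(x, y) \<in> splits z" and "f x * g y \<noteq> 0"
        by (auto simp: tmul_eq_sum_splits elim!: sum.not_neutral_contains_not_neutral)
    then show "z \<in> (\<lambda>(x, y). x @ y) ` ({x. f x \<noteq> 0} \<times> {y. g y \<noteq> 0})"
      by (auto simp: splits_def)
  qed
  show ?thesis
    using assms unfolding finsupp_def by (intro finite_subset[OF supp]) simp
qed

lemma finsupp_tpow [simp]: "finsupp f \<Longrightarrow> finsupp (tpow f n)"
  by (induction n) simp_all

lemma finsupp_induct [consumes 1, case_names zero add]:
  assumes "finsupp g"
    and "P tzero"
    and "\<And>g y s. finsupp g \<Longrightarrow> P g \<Longrightarrow> P (tadd g (tsmul s (wd y)))"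
  shows "P g"
proof -
  have "P g" if "finite S" and "{y. g y \<noteq> 0} \<subseteq> S" for S g
    using that
  proof (induction S arbitrary: g rule: finite_induct)
    case empty
    then have "g = tzero" by (auto simp: fun_eq_iff tzero_def)
    then show ?case using assms(2) by simp
  next
    case (insert y S)
    have supp: "{z. (g(y := 0)) z \<noteq> 0} \<subseteq> S"
      using insert.prems by auto
    then have "finsupp (g(y := 0))"
      unfolding finsupp_def using insert.hyps(1) by (rule finite_subset)
    moreover have "P (g(y := 0))"
      using supp by (rule insert.IH)
    ultimately have "P (tadd (g(y := 0)) (tsmul (g y) (wd y)))"
      by (rule assms(3))
    moreover have "tadd (g(y := 0)) (tsmul (g y) (wd y)) = g"
      by (simp add: fun_eq_iff tadd_def tsmul_def wd_def)
    ultimately show ?case by simp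
  qed
  then show ?thesis
    using assms(1) unfolding finsupp_def by blast
qed

lemma lin_eq_sum:
  assumes "finite S" and "{y. f y \<noteq> 0} \<subseteq> S"
  shows "lin M f z = (\<Sum>y\<in>S. f y * M y z)"
  unfolding lin_def using assms by (intro sum.mono_neutral_left) auto

lemma finsupp_lin [simp]:
  assumes "finsupp f" and "\<And>y. finsupp (M y)"
  shows "finsupp (lin M f)"
proof -
  have supp: "{z. lin M f z \<noteq> 0} \<subseteq> (\<Union>y\<in>{y. f y \<noteq> 0}. {z. M y z \<noteq> 0})"
    by (auto simp: lin_def elim!: sum.not_neutral_contains_not_neutral)
  show ?thesis
    using assms unfolding finsupp_def by (intro finite_subset[OF supp]) auto
qed

lemma lin_linear:
  assumes "finsupp f" and "finsupp g"
  shows "lin M (\<lambda>z. s * f z + t * g z) = (\<lambda>z. s * lin M f z + t * lin M g z)"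
proof
  fix z
  let ?S = "{y. f y \<noteq> 0} \<union> {y. g y \<noteq> 0}"
  have "finite ?S"
    using assms by (simp add: finsupp_def)
  moreover have "{y. s * f y + t * g y \<noteq> 0} \<subseteq> ?S"
    by auto
  ultimately show "lin M (\<lambda>z. s * f z + t * g z) z = s * lin M f z + t * lin M g z"
    by (simp add: lin_eq_sum[of ?S] sum.distrib sum_distrib_left algebra_simps)
qed

lemma lin_tadd: "finsupp f \<Longrightarrow> finsupp g \<Longrightarrow> lin M (tadd f g) = tadd (lin M f) (lin M g)"
  using lin_linear[of f g M 1 1] by (simp add: tadd_def)

lemma lin_tsub: "finsupp f \<Longrightarrow> finsupp g \<Longrightarrow> lin M (tsub f g) = tsub (lin M f) (lin M g)"
  using lin_linear[of f g M 1 "-1"] by (simp add: tsub_def)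

lemma lin_tsmul: "finsupp f \<Longrightarrow> lin M (tsmul s f) = tsmul s (lin M f)"
  using lin_linear[OF _ finsupp_tzero, of f M s 0] by (simp add: tsmul_def tzero_def)

lemma lin_wd [simp]: "lin M (wd x) = M x"
  by (simp add: fun_eq_iff lin_eq_sum[of "{x}"] wd_def)

lemma lin_tzero [simp]: "lin M tzero = tzero" and lin_zero_action [simp]: "lin (\<lambda>_. tzero) f = tzero"
  by (simp_all add: fun_eq_iff lin_def tzero_def)

lemma lin_tmul:
  assumes "finsupp f" and "finsupp g"
    and "\<And>y. finsupp (B y)" and "\<And>y. finsupp (D y)"
    and leibniz: "\<And>x y. M (x @ y) = tadd (tmul (A x) (B y)) (tmul (C x) (D y))"
  shows "lin M (tmul f g) = tadd (tmul (lin A f) (lin B g)) (tmul (lin C f) (lin D g))"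
  using assms(1)
proof (induction f rule: finsupp_induct)
  case zero
  then show ?case by simp
next
  case (add f x s)
  note finsupp_f = add.hyps(1)
  have "lin M (tmul (wd x) g) = tadd (tmul (A x) (lin B g)) (tmul (C x) (lin D g))"
    using assms(2)
  proof (induction g rule: finsupp_induct)
    case zero
    then show ?case by simp
  next
    case (add g y t)
    then show ?case
      by (simp add: tmul_distribs lin_tadd lin_tsmul tmul_wd_wd leibniz)
        (simp add: fun_eq_iff tadd_def tsmul_def algebra_simps)
  qed
  with add.IH show ?case
    using assms(2) finsupp_f
    by (simp add: tmul_distribs lin_tadd lin_tsmul)
      (simp add: fun_eq_iff tadd_def tsmul_def algebra_simps)
qed


section \<open>The action of \<open>U\<^sub>q(sl(2))\<close> on the tensor algebra\<close>

lemma finsupp_action_gen [simp]: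
  "finsupp (Ep1 q x)" "finsupp (Em1 q x)" "finsupp (X1 q x)" "finsupp (Y1 q x)"
  by (cases x; simp add: tzero_def[symmetric])+

lemma finsupp_action_word [simp]:
  "finsupp (EpW q w)" "finsupp (EmW q w)" "finsupp (XW q w)" "finsupp (YW q w)"
  by (induction w) simp_all

lemma EpW_append: "EpW q (x @ y) = tmul (EpW q x) (EpW q y)"
  by (induction x) (simp_all add: tone_def[symmetric] tmul_assoc)

lemma EmW_append: "EmW q (x @ y) = tmul (EmW q x) (EmW q y)"
  by (induction x) (simp_all add: tmul_assoc)

lemma XW_append: "XW q (x @ y) = tadd (tmul (EmW q x) (XW q y)) (tmul (XW q x) (EpW q y))"
  by (induction x) (simp_all add: tmul_assoc tmul_tadd_left tmul_tadd_right EpW_append tadd_assoc)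

lemma YW_append: "YW q (x @ y) = tadd (tmul (EmW q x) (YW q y)) (tmul (YW q x) (EpW q y))"
  by (induction x) (simp_all add: tmul_assoc tmul_tadd_left tmul_tadd_right EpW_append tadd_assoc)

lemma finsupp_action [simp]:
  "finsupp f \<Longrightarrow> finsupp (Ep q f)" "finsupp f \<Longrightarrow> finsupp (Em q f)"
  "finsupp f \<Longrightarrow> finsupp (Xop q f)" "finsupp f \<Longrightarrow> finsupp (Yop q f)"
  by (simp_all add: Ep_def Em_def Xop_def Yop_def)

lemma Ep_tmul: "finsupp f \<Longrightarrow> finsupp g \<Longrightarrow> Ep q (tmul f g) = tmul (Ep q f) (Ep q g)"
  unfolding Ep_def by (subst lin_tmul[where C = "\<lambda>_. tzero"]) (simp_all add: EpW_append)

lemma Em_tmul: "finsupp f \<Longrightarrow> finsupp g \<Longrightarrow> Em q (tmul f g) = tmul (Em q f) (Em q g)"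
  unfolding Em_def by (subst lin_tmul[where C = "\<lambda>_. tzero"]) (simp_all add: EmW_append)

lemma Xop_tmul:
  "finsupp f \<Longrightarrow> finsupp g \<Longrightarrow>
    Xop q (tmul f g) = tadd (tmul (Em q f) (Xop q g)) (tmul (Xop q f) (Ep q g))"
  unfolding Xop_def Em_def Ep_def by (rule lin_tmul) (simp_all add: XW_append)

lemma Yop_tmul:
  "finsupp f \<Longrightarrow> finsupp g \<Longrightarrow>
    Yop q (tmul f g) = tadd (tmul (Em q f) (Yop q g)) (tmul (Yop q f) (Ep q g))"
  unfolding Yop_def Em_def Ep_def by (rule lin_tmul) (simp_all add: YW_append)

lemma action_tadd:
  "finsupp f \<Longrightarrow> finsupp g \<Longrightarrow> Ep q (tadd f g) = tadd (Ep q f) (Ep q g)"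
  "finsupp f \<Longrightarrow> finsupp g \<Longrightarrow> Em q (tadd f g) = tadd (Em q f) (Em q g)"
  "finsupp f \<Longrightarrow> finsupp g \<Longrightarrow> Xop q (tadd f g) = tadd (Xop q f) (Xop q g)"
  "finsupp f \<Longrightarrow> finsupp g \<Longrightarrow> Yop q (tadd f g) = tadd (Yop q f) (Yop q g)"
  by (simp_all add: Ep_def Em_def Xop_def Yop_def lin_tadd)

lemma action_tsub:
  "finsupp f \<Longrightarrow> finsupp g \<Longrightarrow> Ep q (tsub f g) = tsub (Ep q f) (Ep q g)"
  "finsupp f \<Longrightarrow> finsupp g \<Longrightarrow> Em q (tsub f g) = tsub (Em q f) (Em q g)"
  "finsupp f \<Longrightarrow> finsupp g \<Longrightarrow> Xop q (tsub f g) = tsub (Xop q f) (Xop q g)"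
  "finsupp f \<Longrightarrow> finsupp g \<Longrightarrow> Yop q (tsub f g) = tsub (Yop q f) (Yop q g)"
  by (simp_all add: Ep_def Em_def Xop_def Yop_def lin_tsub)

lemma action_tsmul:
  "finsupp f \<Longrightarrow> Ep q (tsmul s f) = tsmul s (Ep q f)"
  "finsupp f \<Longrightarrow> Em q (tsmul s f) = tsmul s (Em q f)"
  "finsupp f \<Longrightarrow> Xop q (tsmul s f) = tsmul s (Xop q f)"
  "finsupp f \<Longrightarrow> Yop q (tsmul s f) = tsmul s (Yop q f)"
  by (simp_all add: Ep_def Em_def Xop_def Yop_def lin_tsmul)

lemma action_tzero [simp]:
  "Ep q tzero = tzero" "Em q tzero = tzero" "Xop q tzero = tzero" "Yop q tzero = tzero"
  by (simp_all add: Ep_def Em_def Xop_def Yop_def)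

lemma action_tone [simp]:
  "Ep q tone = tone" "Em q tone = tone" "Xop q tone = tzero" "Yop q tone = tzero"
  by (simp_all add: Ep_def Em_def Xop_def Yop_def tone_def)

lemma action_gens [simp]:
  "Ep q gu = tsmul q gu" "Ep q gv = gv" "Ep q gw = tsmul (inverse q) gw"
  "Em q gu = tsmul (inverse q) gu" "Em q gv = gv" "Em q gw = tsmul q gw"
  "Xop q gu = tzero" "Xop q gv = tsmul (- (q + inverse q)) gu" "Xop q gw = gv"
  "Yop q gu = tsmul (-1) gv" "Yop q gv = tsmul (q + inverse q) gw" "Yop q gw = tzero"
  by (simp_all add: Ep_def Em_def Xop_def Yop_def gu_def gv_def gw_def tone_def[symmetric])


section \<open>The quotient algebra\<close>

lemma relideal_tadd:
  assumes "x \<in> relideal q h c" and "y \<in> relideal q h c"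
  shows "tadd x y \<in> relideal q h c"
  using assms(2)
proof (induction y rule: relideal.induct)
  case zero
  then show ?case using assms(1) by simp
next
  case (step y r s l m)
  then show ?case
    using relideal.step[OF step.IH step.hyps(2)] by (simp add: tadd_assoc)
qed

lemma relideal_tsmul:
  assumes "x \<in> relideal q h c"
  shows "tsmul t x \<in> relideal q h c"
  using assms
proof (induction x rule: relideal.induct)
  case zero
  then show ?case by (simp add: relideal.zero)
next
  case (step y r s l m)
  have "tsmul t (tadd y (tsmul s (tmul (tmul (wd l) r) (wd m))))
      = tadd (tsmul t y) (tsmul (t * s) (tmul (tmul (wd l) r) (wd m)))"
    by (simp add: fun_eq_iff tsmul_def tadd_def algebra_simps)
  then show ?case
    using relideal.step[OF step.IH step.hyps(2)] by simp
qed

lemma relideal_tsub: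
  assumes "x \<in> relideal q h c" and "y \<in> relideal q h c"
  shows "tsub x y \<in> relideal q h c"
proof -
  have "tsub x y = tadd x (tsmul (-1) y)"
    by (simp add: fun_eq_iff tsub_def tadd_def tsmul_def)
  then show ?thesis
    using assms by (simp add: relideal_tadd relideal_tsmul)
qed

lemma relideal_generator:
  "r \<in> rels q h c \<Longrightarrow> tmul (tmul (wd l) r) (wd m) \<in> relideal q h c"
  using relideal.step[OF relideal.zero, of r q h c 1 l m] by (simp add: tsmul_def)

lemma rels_in_relideal: "r \<in> rels q h c \<Longrightarrow> r \<in> relideal q h c"
  using relideal_generator[of r q h c "[]" "[]"] by (simp add: tone_def[symmetric])

lemma relideal_tmul_left:
  assumes "finsupp g" and "x \<in> relideal q h c"
  shows "tmul g x \<in> relideal q h c"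
  using assms(2)
proof (induction x rule: relideal.induct)
  case zero
  then show ?case by (simp add: relideal.zero)
next
  case (step y r s l m)
  have "tmul g (tmul (tmul (wd l) r) (wd m)) \<in> relideal q h c"
    using assms(1)
  proof (induction g rule: finsupp_induct)
    case zero
    then show ?case by (simp add: relideal.zero)
  next
    case (add g y s)
    have "tmul (wd y) (tmul (tmul (wd l) r) (wd m)) = tmul (tmul (wd (y @ l)) r) (wd m)"
      by (simp add: tmul_assoc tmul_wd_wd[symmetric])
    then show ?case
      using add.IH relideal_generator[OF step.hyps(2)]
      by (simp add: tmul_tadd_left tmul_tsmul_left relideal_tadd relideal_tsmul)
  qed
  then show ?case
    using step.IH by (simp add: tmul_tadd_right tmul_tsmul_right relideal_tadd relideal_tsmul)
qed

lemma relideal_tmul_right: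
  assumes "finsupp g" and "x \<in> relideal q h c"
  shows "tmul x g \<in> relideal q h c"
  using assms(2)
proof (induction x rule: relideal.induct)
  case zero
  then show ?case by (simp add: relideal.zero)
next
  case (step y r s l m)
  have "tmul (tmul (tmul (wd l) r) (wd m)) g \<in> relideal q h c"
    using assms(1)
  proof (induction g rule: finsupp_induct)
    case zero
    then show ?case by (simp add: relideal.zero)
  next
    case (add g y s)
    have "tmul (tmul (tmul (wd l) r) (wd m)) (wd y) = tmul (tmul (wd l) r) (wd (m @ y))"
      by (simp add: tmul_assoc tmul_wd_wd[symmetric])
    then show ?case
      using add.IH relideal_generator[OF step.hyps(2)]
      by (simp add: tmul_tadd_right tmul_tsmul_right relideal_tadd relideal_tsmul)
  qed
  then show ?case
    using step.IH by (simp add: tmul_tadd_left tmul_tsmul_left relideal_tadd relideal_tsmul)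
qed

lemma eqA_refl [simp]: "eqA q h c f f"
  using relideal.zero by (simp add: eqA_def tsub_def tzero_def)

lemma eqA_eqI: "f = g \<Longrightarrow> eqA q h c f g"
  by simp

lemma eqA_trans [trans]: "eqA q h c f g \<Longrightarrow> eqA q h c g k \<Longrightarrow> eqA q h c f k"
  unfolding eqA_def using relideal_tadd[of "tsub f g" q h c "tsub g k"]
  by (simp add: tsub_def tadd_def)

(* Calculations mixing = and eqA diverge with the generic substitution rules;
   these mixed transitivity rules take precedence. *)
lemma eqA_eq_trans [trans]: "eqA q h c f g \<Longrightarrow> g = k \<Longrightarrow> eqA q h c f k"
  by simp

lemma eq_eqA_trans [trans]: "f = g \<Longrightarrow> eqA q h c g k \<Longrightarrow> eqA q h c f k"
  by simp

lemma eqA_tadd: "eqA q h c f g \<Longrightarrow> eqA q h c f' g' \<Longrightarrow> eqA q h c (tadd f f') (tadd g g')"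
  unfolding eqA_def using relideal_tadd[of "tsub f g" q h c "tsub f' g'"]
  by (simp add: tsub_def tadd_def algebra_simps)

lemma eqA_tsmul: "eqA q h c f g \<Longrightarrow> eqA q h c (tsmul s f) (tsmul s g)"
  unfolding eqA_def using relideal_tsmul[of "tsub f g" q h c s]
  by (simp add: tsub_def tsmul_def algebra_simps)

lemma eqA_tsub: "eqA q h c f g \<Longrightarrow> eqA q h c f' g' \<Longrightarrow> eqA q h c (tsub f f') (tsub g g')"
  unfolding eqA_def using relideal_tsub[of "tsub f g" q h c "tsub f' g'"]
  by (simp add: tsub_def algebra_simps)

lemma eqA_tmul_left: "finsupp k \<Longrightarrow> eqA q h c f g \<Longrightarrow> eqA q h c (tmul k f) (tmul k g)"
  unfolding eqA_def using relideal_tmul_left[of k "tsub f g" q h c] by (simp add: tmul_tsub_right)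

lemma eqA_tmul_right: "finsupp k \<Longrightarrow> eqA q h c f g \<Longrightarrow> eqA q h c (tmul f k) (tmul g k)"
  unfolding eqA_def using relideal_tmul_right[of k "tsub f g" q h c] by (simp add: tmul_tsub_left)


definition vtilde :: "complex \<Rightarrow> tens" where
  "vtilde a = tsub gv (tsmul a tone)"

lemma finsupp_vtilde [simp]: "finsupp (vtilde a)"
  by (simp add: vtilde_def)

lemma action_vtilde [simp]:
  "Ep q (vtilde a) = vtilde a" "Em q (vtilde a) = vtilde a"
  "Xop q (vtilde a) = tsmul (- (q + inverse q)) gu" "Yop q (vtilde a) = tsmul (q + inverse q) gw"
  by (simp_all add: vtilde_def action_tsub action_tsmul)

lemma E_tpow_vtilde [simp]:
  "Ep q (tpow (vtilde a) k) = tpow (vtilde a) k" "Em q (tpow (vtilde a) k) = tpow (vtilde a) k"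
  by (induction k) (simp_all add: Ep_tmul Em_tmul)

lemma Xop_tpow_vtilde_Suc:
  "Xop q (tpow (vtilde a) (Suc k))
     = tadd (tmul (vtilde a) (Xop q (tpow (vtilde a) k)))
            (tsmul (- (q + inverse q)) (tmul gu (tpow (vtilde a) k)))"
  by (simp add: Xop_tmul tmul_tsmul_left)

lemma Yop_tpow_vtilde_Suc:
  "Yop q (tpow (vtilde a) (Suc k))
     = tadd (tmul (vtilde a) (Yop q (tpow (vtilde a) k)))
            (tsmul (q + inverse q) (tmul gw (tpow (vtilde a) k)))"
  by (simp add: Yop_tmul tmul_tsmul_left)

lemma Ep_Xop_tpow_vtilde: "Ep q (Xop q (tpow (vtilde a) k)) = tsmul q (Xop q (tpow (vtilde a) k))"
proof (induction k)
  case (Suc k)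
  then show ?case
    unfolding Xop_tpow_vtilde_Suc
    by (simp add: action_tadd action_tsmul Ep_tmul tmul_distribs del: tpow.simps)
      (simp add: fun_eq_iff tadd_def tsmul_def algebra_simps)
qed simp

lemma Ep_Yop_tpow_vtilde:
  "Ep q (Yop q (tpow (vtilde a) k)) = tsmul (inverse q) (Yop q (tpow (vtilde a) k))"
proof (induction k)
  case (Suc k)
  then show ?case
    unfolding Yop_tpow_vtilde_Suc
    by (simp add: action_tadd action_tsmul Ep_tmul tmul_distribs del: tpow.simps)
      (simp add: fun_eq_iff tadd_def tsmul_def algebra_simps)
qed simp

lemma Kop_tpow_vtilde:
  "Kop q (tpow (vtilde a) k)
     = tsmul (q / 2) (tadd (Xop q (Yop q (tpow (vtilde a) k))) (Yop q (Xop q (tpow (vtilde a) k))))"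
  by (simp add: Kop_def fun_eq_iff tadd_def tsub_def tsmul_def)

lemma Kop_tone [simp]: "Kop q tone = tzero"
  using Kop_tpow_vtilde[of q a 0] by simp

lemma Kop_tpow_vtilde_Suc:
  assumes "q \<noteq> 0"
  shows "Kop q (tpow (vtilde a) (Suc k))
     = tadd (tmul (vtilde a) (Kop q (tpow (vtilde a) k)))
         (tadd (tsmul (q^2 + 1) (tmul gv (tpow (vtilde a) k)))
            (tsub (tsmul (q * (q^2 + 1)) (tmul gw (Xop q (tpow (vtilde a) k))))
                  (tsmul ((q^2 + 1) / q) (tmul gu (Yop q (tpow (vtilde a) k))))))"
  unfolding Kop_tpow_vtilde Xop_tpow_vtilde_Suc Yop_tpow_vtilde_Suc
  using assms
  by (simp add: action_tadd action_tsmul Xop_tmul Yop_tmul Ep_Xop_tpow_vtilde Ep_Yop_tpow_vtilde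
      tmul_distribs del: tpow.simps)
    (simp add: fun_eq_iff tadd_def tsub_def tsmul_def field_simps power2_eq_square)

lemma Kop_vtilde: "q \<noteq> 0 \<Longrightarrow> Kop q (vtilde a) = tsmul (q^2 + 1) gv"
  using Kop_tpow_vtilde_Suc[of q a 0] by simp

definition vcomb :: "complex \<Rightarrow> complex \<Rightarrow> complex \<Rightarrow> complex \<Rightarrow> nat \<Rightarrow> tens" where
  "vcomb a \<alpha> \<beta> \<gamma> k = tadd (tadd (tsmul \<alpha> (tpow (vtilde a) (k + 2)))
     (tsmul \<beta> (tpow (vtilde a) (k + 1)))) (tsmul \<gamma> (tpow (vtilde a) k))"

lemma vcomb_cong: "\<alpha> = \<alpha>' \<Longrightarrow> \<beta> = \<beta>' \<Longrightarrow> \<gamma> = \<gamma>' \<Longrightarrow> vcomb a \<alpha> \<beta> \<gamma> k = vcomb a \<alpha>' \<beta>' \<gamma>' k"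
  by simp

lemma vcomb_tadd:
  "tadd (vcomb a \<alpha> \<beta> \<gamma> k) (vcomb a \<alpha>' \<beta>' \<gamma>' k) = vcomb a (\<alpha> + \<alpha>') (\<beta> + \<beta>') (\<gamma> + \<gamma>') k"
  by (simp add: vcomb_def fun_eq_iff tadd_def tsmul_def algebra_simps del: tpow.simps)

lemma vcomb_tsub:
  "tsub (vcomb a \<alpha> \<beta> \<gamma> k) (vcomb a \<alpha>' \<beta>' \<gamma>' k) = vcomb a (\<alpha> - \<alpha>') (\<beta> - \<beta>') (\<gamma> - \<gamma>') k"
  by (simp add: vcomb_def fun_eq_iff tadd_def tsub_def tsmul_def algebra_simps del: tpow.simps)

lemma tsmul_vcomb: "tsmul s (vcomb a \<alpha> \<beta> \<gamma> k) = vcomb a (s * \<alpha>) (s * \<beta>) (s * \<gamma>) k"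
  by (simp add: vcomb_def fun_eq_iff tadd_def tsmul_def algebra_simps del: tpow.simps)

lemma tmul_vcomb_tpow_vtilde:
  "tmul (vcomb a \<alpha> \<beta> \<gamma> j) (tpow (vtilde a) k) = vcomb a \<alpha> \<beta> \<gamma> (j + k)"
  by (simp add: vcomb_def tmul_distribs tpow_add del: tpow.simps)

lemma tmul_vtilde_vcomb: "tmul (vtilde a) (vcomb a \<alpha> \<beta> \<gamma> k) = vcomb a \<alpha> \<beta> \<gamma> (Suc k)"
  by (simp add: vcomb_def tmul_distribs)

lemma tmul_gv_tpow_vtilde: "tmul gv (tpow (vtilde a) (Suc k)) = vcomb a 1 a 0 k"
proof -
  have gv: "gv = tadd (vtilde a) (tsmul a tone)"
    by (simp add: vtilde_def fun_eq_iff tadd_def tsub_def tsmul_def)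
  show ?thesis
    by (simp add: gv vcomb_def tmul_distribs del: tpow.simps)
      (simp add: fun_eq_iff tadd_def tsmul_def tzero_def)
qed


definition qint :: "'a::comm_semiring_1 \<Rightarrow> nat \<Rightarrow> 'a" where
  "qint x n = (\<Sum>i<n. x ^ i)"

lemma qint_0 [simp]: "qint x 0 = 0"
  by (simp add: qint_def)

lemma qint_Suc: "qint x (Suc n) = x * qint x n + 1"
  unfolding qint_def sum.lessThan_Suc_shift by (simp add: sum_distrib_left add.commute)

lemma qint_eq: "x \<noteq> 1 \<Longrightarrow> qint x n = (x ^ n - 1) / (x - 1 :: 'a :: field)"
  unfolding qint_def by (rule geometric_sum)

lemma q_mult_betaq:
  fixes q :: complex
  assumes "q \<noteq> 0" and "q^2 \<noteq> 1"
  shows "q * betaq k q = qint (inverse (q^2)) k"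
proof -
  define P where "P = q powi (2 * int k - 1)"
  have "P \<noteq> 0"
    using assms(1) by (simp add: P_def)
  have "q ^ (2 * k) = q * P"
    using power_int_add[of q 1 "2 * int k - 1"] assms(1)
    by (simp add: P_def power_int_of_nat[of q "2 * k", simplified])
  moreover have "inverse (q^2) ^ k = inverse (q ^ (2 * k))"
    by (simp add: power_inverse power_mult)
  moreover have "inverse (q^2) \<noteq> 1"
    using assms(2) by (metis inverse_1 inverse_inverse_eq)
  ultimately show ?thesis
    using assms \<open>P \<noteq> 0\<close> unfolding betaq_def P_def[symmetric]
    by (simp add: qint_eq field_simps) (simp add: power2_eq_square power4_eq_xxxx algebra_simps)
qed


section \<open>The Casimir on powers of the shifted generator in the quotient\<close>

locale A_algebra =
  fixes q h c a :: complex
  assumes q_nonzero: "q \<noteq> 0"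
    and h_eq: "h = a * (1 - q^2)"
begin

abbreviation equivA :: "tens \<Rightarrow> tens \<Rightarrow> bool" (infix "\<doteq>" 50) where
  "f \<doteq> g \<equiv> eqA q h c f g"

lemma eqA_vtilde_gu: "tmul (vtilde a) gu \<doteq> tsmul (q^2) (tmul gu (vtilde a))"
proof -
  let ?r = "tadd (tsub (tsmul (q^2) (tmul gu gv)) (tmul gv gu)) (tsmul h gu)"
  have "?r \<in> relideal q h c"
    by (rule rels_in_relideal) (simp add: rels_def)
  moreover have "tsmul (-1) ?r = tsub (tmul (vtilde a) gu) (tsmul (q^2) (tmul gu (vtilde a)))"
    by (simp add: vtilde_def tmul_distribs)
      (simp add: fun_eq_iff tadd_def tsub_def tsmul_def h_eq algebra_simps)
  ultimately show ?thesis
    unfolding eqA_def by (metis relideal_tsmul)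
qed

lemma eqA_vtilde_gw: "tmul (vtilde a) gw \<doteq> tsmul (inverse (q^2)) (tmul gw (vtilde a))"
proof -
  let ?r = "tsub (tadd (tsmul (- (q^2)) (tmul gv gw)) (tmul gw gv)) (tsmul h gw)"
  have "?r \<in> relideal q h c"
    by (rule rels_in_relideal) (simp add: rels_def)
  moreover have "tsmul (- inverse (q^2)) ?r
      = tsub (tmul (vtilde a) gw) (tsmul (inverse (q^2)) (tmul gw (vtilde a)))"
    using q_nonzero
    by (simp add: vtilde_def tmul_distribs)
      (simp add: fun_eq_iff tadd_def tsub_def tsmul_def h_eq field_simps)
  ultimately show ?thesis
    unfolding eqA_def by (metis relideal_tsmul)
qed

lemma eqA_Xop_tpow_vtilde_Suc:
  "Xop q (tpow (vtilde a) (Suc n))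
    \<doteq> tsmul (- (q + inverse q) * qint (q^2) (Suc n)) (tmul gu (tpow (vtilde a) n))"
proof (induction n)
  case 0
  then show ?case by (simp add: Xop_tpow_vtilde_Suc qint_Suc)
next
  case (Suc n)
  let ?y = "- (q + inverse q)" and ?s = "qint (q^2) (Suc n)" and ?v = "vtilde a"
  have "Xop q (tpow ?v (Suc (Suc n)))
      = tadd (tmul ?v (Xop q (tpow ?v (Suc n)))) (tsmul ?y (tmul gu (tpow ?v (Suc n))))"
    by (rule Xop_tpow_vtilde_Suc)
  also have "\<dots> \<doteq> tadd (tmul ?v (tsmul (?y * ?s) (tmul gu (tpow ?v n))))
      (tsmul ?y (tmul gu (tpow ?v (Suc n))))"
    by (rule eqA_tadd[OF eqA_tmul_left[OF finsupp_vtilde Suc.IH] eqA_refl])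
  also have "\<dots> = tadd (tsmul (?y * ?s) (tmul (tmul ?v gu) (tpow ?v n)))
      (tsmul ?y (tmul gu (tpow ?v (Suc n))))"
    by (simp add: tmul_distribs tmul_assoc del: tpow.simps)
  also have "\<dots> \<doteq> tadd (tsmul (?y * ?s) (tmul (tsmul (q^2) (tmul gu ?v)) (tpow ?v n)))
      (tsmul ?y (tmul gu (tpow ?v (Suc n))))"
    by (rule eqA_tadd[OF eqA_tsmul[OF eqA_tmul_right[OF finsupp_tpow eqA_vtilde_gu]] eqA_refl]) simp
  also have "\<dots> = tsmul (?y * qint (q^2) (Suc (Suc n))) (tmul gu (tpow ?v (Suc n)))"
    unfolding qint_Suc[of _ "Suc n"]
    by (simp add: tmul_distribs tmul_assoc)
      (simp add: fun_eq_iff tadd_def tsmul_def algebra_simps)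
  finally show ?case .
qed

lemma eqA_Yop_tpow_vtilde_Suc:
  "Yop q (tpow (vtilde a) (Suc n))
    \<doteq> tsmul ((q + inverse q) * qint (inverse (q^2)) (Suc n)) (tmul gw (tpow (vtilde a) n))"
proof (induction n)
  case 0
  then show ?case by (simp add: Yop_tpow_vtilde_Suc qint_Suc)
next
  case (Suc n)
  let ?y = "q + inverse q" and ?t = "qint (inverse (q^2)) (Suc n)" and ?v = "vtilde a"
  have "Yop q (tpow ?v (Suc (Suc n)))
      = tadd (tmul ?v (Yop q (tpow ?v (Suc n)))) (tsmul ?y (tmul gw (tpow ?v (Suc n))))"
    by (rule Yop_tpow_vtilde_Suc)
  also have "\<dots> \<doteq> tadd (tmul ?v (tsmul (?y * ?t) (tmul gw (tpow ?v n))))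
      (tsmul ?y (tmul gw (tpow ?v (Suc n))))"
    by (rule eqA_tadd[OF eqA_tmul_left[OF finsupp_vtilde Suc.IH] eqA_refl])
  also have "\<dots> = tadd (tsmul (?y * ?t) (tmul (tmul ?v gw) (tpow ?v n)))
      (tsmul ?y (tmul gw (tpow ?v (Suc n))))"
    by (simp add: tmul_distribs tmul_assoc del: tpow.simps)
  also have "\<dots> \<doteq> tadd (tsmul (?y * ?t) (tmul (tsmul (inverse (q^2)) (tmul gw ?v)) (tpow ?v n)))
      (tsmul ?y (tmul gw (tpow ?v (Suc n))))"
    by (rule eqA_tadd[OF eqA_tsmul[OF eqA_tmul_right[OF finsupp_tpow eqA_vtilde_gw]] eqA_refl]) simp
  also have "\<dots> = tsmul (?y * qint (inverse (q^2)) (Suc (Suc n))) (tmul gw (tpow ?v (Suc n)))"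
    unfolding qint_Suc[of _ "Suc n"]
    by (simp add: tmul_distribs tmul_assoc)
      (simp add: fun_eq_iff tadd_def tsmul_def algebra_simps)
  finally show ?case .
qed

text \<open>These are \<open>q\<^sup>2 (r\<^sub>1 - r\<^sub>3)\<close> and \<open>q\<^sup>2 r\<^sub>1 + r\<^sub>3\<close> for the first and third
  defining relations \<open>r\<^sub>1\<close>, \<open>r\<^sub>3\<close>, rewritten in \<open>vtilde a\<close>; no division by \<open>q\<^sup>2 + 1\<close>
  is needed.\<close>

lemma eqA_gw_gu:
  "tsmul ((q^2 + 1)^2) (tmul gw gu)
    \<doteq> vcomb a (- (q^4)) (- (q^2 * a * (q^2 + 1))) (q^2 * (c - a^2)) 0"
  and eqA_gu_gw:
  "tsmul ((q^2 + 1)^2) (tmul gu gw)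
    \<doteq> vcomb a (- 1) (- (a * (q^2 + 1))) (q^2 * (c - a^2)) 0"
proof -
  define r1 where "r1 = tsub (tadd (tadd (tsmul (q^2 + 1) (tmul gu gw)) (tmul gv gv))
      (tsmul ((q^2 + 1) / q^2) (tmul gw gu))) (tsmul c tone)"
  define r3 where "r3 = tsub (tadd (tsmul (q^2 + 1) (tsub (tmul gu gw) (tmul gw gu)))
      (tsmul (1 - q^2) (tmul gv gv))) (tsmul h gv)"
  have r1: "r1 \<in> relideal q h c" and r3: "r3 \<in> relideal q h c"
    by (auto intro: rels_in_relideal simp: rels_def r1_def r3_def)
  have "tsmul (q^2) (tsub r1 r3)
      = tsub (tsmul ((q^2 + 1)^2) (tmul gw gu))
          (vcomb a (- (q^4)) (- (q^2 * a * (q^2 + 1))) (q^2 * (c - a^2)) 0)"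
    using q_nonzero unfolding r1_def r3_def
    by (simp add: vcomb_def vtilde_def tmul_distribs numeral_2_eq_2)
      (simp add: fun_eq_iff tadd_def tsub_def tsmul_def h_eq field_simps, algebra)
  with r1 r3 show "tsmul ((q^2 + 1)^2) (tmul gw gu)
      \<doteq> vcomb a (- (q^4)) (- (q^2 * a * (q^2 + 1))) (q^2 * (c - a^2)) 0"
    unfolding eqA_def by (metis relideal_tsmul relideal_tsub)
  have "tadd (tsmul (q^2) r1) r3
      = tsub (tsmul ((q^2 + 1)^2) (tmul gu gw))
          (vcomb a (- 1) (- (a * (q^2 + 1))) (q^2 * (c - a^2)) 0)"
    using q_nonzero unfolding r1_def r3_def
    by (simp add: vcomb_def vtilde_def tmul_distribs numeral_2_eq_2)
      (simp add: fun_eq_iff tadd_def tsub_def tsmul_def h_eq field_simps, algebra)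
  with r1 r3 show "tsmul ((q^2 + 1)^2) (tmul gu gw)
      \<doteq> vcomb a (- 1) (- (a * (q^2 + 1))) (q^2 * (c - a^2)) 0"
    unfolding eqA_def by (metis relideal_tsmul relideal_tadd)
qed

lemma eqA_gw_Xop_tpow_vtilde_Suc:
  fixes n :: nat
  defines "s \<equiv> qint (q^2) (Suc n)"
  shows "tsmul (q * (q^2 + 1)) (tmul gw (Xop q (tpow (vtilde a) (Suc n))))
    \<doteq> vcomb a (q^4 * s) (q^2 * a * (q^2 + 1) * s) (- (q^2 * (c - a^2) * s)) n"
proof -
  have "tsmul (q * (q^2 + 1)) (tmul gw (Xop q (tpow (vtilde a) (Suc n))))
      \<doteq> tsmul (q * (q^2 + 1)) (tmul gw (tsmul (- (q + inverse q) * s) (tmul gu (tpow (vtilde a) n))))"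
    unfolding s_def by (intro eqA_tsmul eqA_tmul_left eqA_Xop_tpow_vtilde_Suc) simp
  also have "\<dots> = tsmul (- s) (tmul (tsmul ((q^2 + 1)^2) (tmul gw gu)) (tpow (vtilde a) n))"
    using q_nonzero
    by (simp add: tmul_distribs tmul_assoc)
      (simp add: fun_eq_iff tsmul_def field_simps power2_eq_square)
  also have "\<dots> \<doteq> tsmul (- s)
      (tmul (vcomb a (- (q^4)) (- (q^2 * a * (q^2 + 1))) (q^2 * (c - a^2)) 0) (tpow (vtilde a) n))"
    by (intro eqA_tsmul eqA_tmul_right eqA_gw_gu) simp
  also have "\<dots> = vcomb a (q^4 * s) (q^2 * a * (q^2 + 1) * s) (- (q^2 * (c - a^2) * s)) n"
    by (simp add: tmul_vcomb_tpow_vtilde tsmul_vcomb) (intro vcomb_cong; simp add: algebra_simps)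
  finally show ?thesis .
qed

lemma eqA_gu_Yop_tpow_vtilde_Suc:
  fixes n :: nat
  defines "t \<equiv> qint (inverse (q^2)) (Suc n)"
  shows "tsmul ((q^2 + 1) / q) (tmul gu (Yop q (tpow (vtilde a) (Suc n))))
    \<doteq> vcomb a (- (t / q^2)) (- (a * (q^2 + 1) * t / q^2)) ((c - a^2) * t) n"
proof -
  have "tsmul ((q^2 + 1) / q) (tmul gu (Yop q (tpow (vtilde a) (Suc n))))
      \<doteq> tsmul ((q^2 + 1) / q) (tmul gu (tsmul ((q + inverse q) * t) (tmul gw (tpow (vtilde a) n))))"
    unfolding t_def by (intro eqA_tsmul eqA_tmul_left eqA_Yop_tpow_vtilde_Suc) simp
  also have "\<dots> = tsmul (t / q^2) (tmul (tsmul ((q^2 + 1)^2) (tmul gu gw)) (tpow (vtilde a) n))"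
    using q_nonzero
    by (simp add: tmul_distribs tmul_assoc)
      (simp add: fun_eq_iff tsmul_def field_simps power2_eq_square)
  also have "\<dots> \<doteq> tsmul (t / q^2)
      (tmul (vcomb a (- 1) (- (a * (q^2 + 1))) (q^2 * (c - a^2)) 0) (tpow (vtilde a) n))"
    by (intro eqA_tsmul eqA_tmul_right eqA_gu_gw) simp
  also have "\<dots> = vcomb a (- (t / q^2)) (- (a * (q^2 + 1) * t / q^2)) ((c - a^2) * t) n"
    using q_nonzero
    by (simp add: tmul_vcomb_tpow_vtilde tsmul_vcomb) (intro vcomb_cong; simp add: algebra_simps)
  finally show ?thesis .
qed

lemma eqA_Kop_tpow_vtilde_step:
  fixes n :: nat
  defines "s \<equiv> qint (q^2) (Suc n)" and "t \<equiv> qint (inverse (q^2)) (Suc n)"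
  assumes "Kop q (tpow (vtilde a) (Suc n)) \<doteq> Z"
  shows "Kop q (tpow (vtilde a) (Suc (Suc n)))
    \<doteq> tadd (tmul (vtilde a) Z)
        (vcomb a (q^2 + 1 + q^4 * s + t / q^2) (a * (q^2 + 1) * (1 + q^2 * s + t / q^2))
           (- (c - a^2) * (q^2 * s + t)) n)"
proof -
  have "Kop q (tpow (vtilde a) (Suc (Suc n)))
      = tadd (tmul (vtilde a) (Kop q (tpow (vtilde a) (Suc n))))
         (tadd (tsmul (q^2 + 1) (tmul gv (tpow (vtilde a) (Suc n))))
            (tsub (tsmul (q * (q^2 + 1)) (tmul gw (Xop q (tpow (vtilde a) (Suc n)))))
                  (tsmul ((q^2 + 1) / q) (tmul gu (Yop q (tpow (vtilde a) (Suc n)))))))"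
    by (rule Kop_tpow_vtilde_Suc[OF q_nonzero])
  also have "\<dots> \<doteq> tadd (tmul (vtilde a) Z) (tadd (tsmul (q^2 + 1) (vcomb a 1 a 0 n))
      (tsub (vcomb a (q^4 * s) (q^2 * a * (q^2 + 1) * s) (- (q^2 * (c - a^2) * s)) n)
            (vcomb a (- (t / q^2)) (- (a * (q^2 + 1) * t / q^2)) ((c - a^2) * t) n)))"
    unfolding tmul_gv_tpow_vtilde s_def t_def
    by (intro eqA_tadd eqA_tsub eqA_tmul_left assms(3) eqA_gw_Xop_tpow_vtilde_Suc
        eqA_gu_Yop_tpow_vtilde_Suc eqA_refl finsupp_vtilde)
  also have "\<dots> = tadd (tmul (vtilde a) Z)
      (vcomb a (q^2 + 1 + q^4 * s + t / q^2) (a * (q^2 + 1) * (1 + q^2 * s + t / q^2))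
         (- (c - a^2) * (q^2 * s + t)) n)"
    by (simp add: tsmul_vcomb vcomb_tsub vcomb_tadd)
      (intro arg_cong[where f = "tadd (tmul (vtilde a) Z)"] vcomb_cong;
        simp add: q_nonzero field_simps)
  finally show ?thesis .
qed

text \<open>The coefficient identities of the induction step follow from the recursion
  \<open>qint x (Suc n) = x * qint x n + 1\<close> for \<open>x = q\<^sup>2\<close> and \<open>x = q\<^sup>-\<^sup>2\<close> alone.\<close>

lemma eqA_Kop_tpow_vtilde_Suc_Suc:
  "Kop q (tpow (vtilde a) (Suc (Suc n)))
    \<doteq> tsmul (qint (inverse (q^2)) (n + 2))
        (vcomb a (qint (q^2) (n + 3)) (a * (q^2 + 1) * qint (q^2) (n + 2))
           (- ((c - a^2) * q^2 * qint (q^2) (n + 1))) n)"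
proof (induction n)
  case 0
  have K1: "Kop q (tpow (vtilde a) (Suc 0)) \<doteq> tsmul (q^2 + 1) gv"
    by (simp add: Kop_vtilde q_nonzero)
  have vtilde_gv: "tmul (vtilde a) gv = vcomb a 1 a 0 0"
    by (simp add: vcomb_def vtilde_def tmul_distribs numeral_2_eq_2)
      (simp add: fun_eq_iff tadd_def tsub_def tsmul_def algebra_simps)
  show ?case
    using eqA_Kop_tpow_vtilde_step[OF K1]
    by (rule eqA_eq_trans)
      (simp add: vtilde_gv tmul_tsmul_right tsmul_vcomb vcomb_tadd numeral_3_eq_3 numeral_2_eq_2
        qint_Suc, intro vcomb_cong; simp add: q_nonzero field_simps power4_eq_xxxx)
next
  case (Suc n)
  show ?case
    using eqA_Kop_tpow_vtilde_step[OF Suc.IH]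
    by (rule eqA_eq_trans)
      (simp add: tmul_tsmul_right tmul_vtilde_vcomb tsmul_vcomb vcomb_tadd numeral_3_eq_3
        numeral_2_eq_2 qint_Suc, intro vcomb_cong; simp add: q_nonzero field_simps power4_eq_xxxx)
qed

text \<open>For \<open>k < 2\<close> every term with a negative exponent has a factor \<open>qint _ 0 = 0\<close>,
  so the convention built into \<open>tpowm\<close> is immaterial.\<close>

lemma eqA_Kop_tpow_vtilde:
  "Kop q (tpow (vtilde a) k)
    \<doteq> tsmul (qint (inverse (q^2)) k)
        (tadd (tadd (tsmul (qint (q^2) (k + 1)) (tpowm (vtilde a) k 0))
                    (tsmul (a * (q^2 + 1) * qint (q^2) k) (tpowm (vtilde a) k 1)))
              (tsmul (- ((c - a^2) * q^2 * qint (q^2) (k - 1))) (tpowm (vtilde a) k 2)))"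
proof -
  consider "k = 0" | "k = 1" | n where "k = Suc (Suc n)"
    by (metis One_nat_def not0_implies_Suc)
  then show ?thesis
  proof cases
    case 1
    then show ?thesis by (simp add: tpowm_def)
  next
    case 2
    have "Kop q (tpow (vtilde a) 1) = tsmul (q^2 + 1) gv"
      by (simp add: Kop_vtilde q_nonzero)
    then show ?thesis
      unfolding 2
      by (intro eqA_eqI) (simp add: tpowm_def numeral_2_eq_2 qint_Suc vtilde_def,
          simp add: fun_eq_iff tadd_def tsub_def tsmul_def tzero_def algebra_simps)
  next
    case 3
    show ?thesis
      using eqA_Kop_tpow_vtilde_Suc_Suc[of n] unfolding 3
      by (rule eqA_eq_trans) (simp add: tpowm_def vcomb_def numeral_2_eq_2 numeral_3_eq_3)
  qed
qed

end

theorem proposition1: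
  fixes q h c :: complex and k :: nat
  assumes "q \<noteq> 0"
    and "\<forall>n::nat. n > 0 \<longrightarrow> q ^ n \<noteq> 1"
  defines "a \<equiv> h / (1 - q^2)"
  defines "ct \<equiv> c - a^2"
  defines "vt \<equiv> tsub gv (tsmul a tone)"
  shows "eqA q h c (Kop q (tpow vt k))
     (tsmul (q * betaq k q)
        (tadd (tadd
           (tsmul ((q^(2*(k+1)) - 1) / (q^2 - 1)) (tpowm vt k 0))
           (tsmul (a * (q^2 + 1) * (q^(2*k) - 1) / (q^2 - 1)) (tpowm vt k 1)))
           (tsmul (- (ct * q^2 * (q^(2*(k-1)) - 1) / (q^2 - 1))) (tpowm vt k 2))))"
proof -
  have q2: "q^2 \<noteq> 1"
    using assms(2)[rule_format, of 2] by simp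
  interpret A_algebra q h c a
    using assms(1) q2 by unfold_locales (simp_all add: a_def)
  have qint_q2: "(q^(2*m) - 1) / (q^2 - 1) = qint (q^2) m" for m
    using q2 by (simp add: qint_eq power_mult)
  have "a * (q^2 + 1) * (q^(2*k) - 1) / (q^2 - 1) = a * (q^2 + 1) * qint (q^2) k"
    and "- (ct * q^2 * (q^(2*(k-1)) - 1) / (q^2 - 1)) = - ((c - a^2) * q^2 * qint (q^2) (k - 1))"
    by (simp_all only: ct_def times_divide_eq_right[symmetric] qint_q2)
  moreover have "vt = vtilde a"
    by (simp add: vt_def vtilde_def)
  ultimately show ?thesis
    using eqA_Kop_tpow_vtilde[of k] by (simp only: qint_q2 q_mult_betaq[OF assms(1) q2])
qed

end
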